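(* Let $K$ be a parallelogram and $k\ge1$ an integer. Let $V(K)=\mathcal P_k(K)$, $\bm W(K)=[\mathcal P_k(K)]^2$, and $\bm M(\partial K)=\{\bm\mu:\bm\mu|_F=\bm n\times p_k\text{ for some }p_k\in\mathcal P_k(F),\text{ for each edge }F\subset\partial K\}$. Then $I_M(V(K)\times\bm W(K))=2$.
   Context: $\mathcal P_k$ denotes polynomials of total degree at most $k$. Conventions in 2D: $\nabla\times\bm v=-\partial_yv_1+\partial_xv_2$, $\nabla\times p=(\partial_yp,-\partial_xp)^T$, $\bm n\times\bm v=-n_2v_1+n_1v_2$, $\bm n\times p=(n_2p,-n_1p)^T$, $\bm n\times\bm w\times\bm n:=\bm w-(\bm w\cdot\bm n)\bm n$, $\bm n$ the unit outward normal. $I_M(V(K)\times\bm W(K)):=\dim\bm M(\partial K)-\dim\{\bm n\times v|_{\partial K}:v\in V(K),\nabla\times v=\bm0\}-\dim\{\bm n\times\bm w\times\bm n|_{\partial K}:\bm w\in\bm W(K),\nabla\times\bm w=0\}$. *)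

theory Defs
  imports "HOL-Analysis.Analysis" "HOL-Library.Function_Algebras"
    "HOL-Computational_Algebra.Polynomial"
begin

definition poly2 :: "nat \<Rightarrow> (real^2 \<Rightarrow> real) \<Rightarrow> bool" where
  "poly2 k p \<longleftrightarrow> (\<exists>c :: nat \<Rightarrow> nat \<Rightarrow> real.
      \<forall>x. p x = (\<Sum>i\<le>k. \<Sum>j\<le>k - i. c i j * (x$1)^i * (x$2)^j))"

definition pdx :: "(real^2 \<Rightarrow> real) \<Rightarrow> real^2 \<Rightarrow> real" where
  "pdx p x = deriv (\<lambda>s. p (x + s *\<^sub>R axis 1 1)) 0"
definition pdy :: "(real^2 \<Rightarrow> real) \<Rightarrow> real^2 \<Rightarrow> real" where
  "pdy p x = deriv (\<lambda>s. p (x + s *\<^sub>R axis 2 1)) 0"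

definition curl_s :: "(real^2 \<Rightarrow> real) \<Rightarrow> real^2 \<Rightarrow> real^2" where
  "curl_s p x = vector [pdy p x, - pdx p x]"
definition curl_v :: "(real^2 \<Rightarrow> real^2) \<Rightarrow> real^2 \<Rightarrow> real" where
  "curl_v w x = - pdy (\<lambda>y. w y $ 1) x + pdx (\<lambda>y. w y $ 2) x"

text \<open>n x p = (n2 p, - n1 p) for scalar p; n x w x n = w - (w.n) n.\<close>
definition ncross_s :: "real^2 \<Rightarrow> real \<Rightarrow> real^2" where
  "ncross_s n p = vector [n$2 * p, - (n$1 * p)]"
definition tang :: "real^2 \<Rightarrow> real^2 \<Rightarrow> real^2" where
  "tang n w = w - (w \<bullet> n) *\<^sub>R n"

definition pgram :: "real^2 \<Rightarrow> real^2 \<Rightarrow> real^2 \<Rightarrow> (real^2) set" where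
  "pgram a u v = {a + s *\<^sub>R u + t *\<^sub>R v | s t. s \<in> {0..1} \<and> t \<in> {0..1}}"

definition pg_vertex :: "real^2 \<Rightarrow> real^2 \<Rightarrow> real^2 \<Rightarrow> nat \<Rightarrow> real^2" where
  "pg_vertex a u v i = (if i mod 4 = 0 then a else if i mod 4 = 1 then a + u
      else if i mod 4 = 2 then a + u + v else a + v)"

definition pg_edge :: "real^2 \<Rightarrow> real^2 \<Rightarrow> real^2 \<Rightarrow> nat \<Rightarrow> real \<Rightarrow> real^2" where
  "pg_edge a u v i t = pg_vertex a u v i + t *\<^sub>R (pg_vertex a u v (Suc i) - pg_vertex a u v i)"

definition pg_normal :: "real^2 \<Rightarrow> real^2 \<Rightarrow> real^2 \<Rightarrow> nat \<Rightarrow> real^2" where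
  "pg_normal a u v i = (THE n. norm n = 1
      \<and> n \<bullet> (pg_vertex a u v (Suc i) - pg_vertex a u v i) = 0
      \<and> n \<bullet> ((a + (1/2) *\<^sub>R (u + v)) - pg_vertex a u v i) < 0)"

text \<open>Functions on the boundary are represented edgewise: mu i t is the value at the point
  pg_edge a u v i t of edge i (i < 4, t in [0,1]); they vanish off this index set.\<close>
type_synonym bfield = "nat \<Rightarrow> real \<Rightarrow> real^2"

definition bscale :: "real \<Rightarrow> bfield \<Rightarrow> bfield" where
  "bscale c f = (\<lambda>i t. c *\<^sub>R f i t)"

definition bdim :: "bfield set \<Rightarrow> nat" where
  "bdim S = vector_space.dim bscale S"

definition on_bdry :: "nat \<Rightarrow> real \<Rightarrow> bool" where
  "on_bdry i t \<longleftrightarrow> i < 4 \<and> t \<in> {0..1}"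

definition Mspace :: "nat \<Rightarrow> real^2 \<Rightarrow> real^2 \<Rightarrow> real^2 \<Rightarrow> bfield set" where
  "Mspace k a u v = {mu. (\<forall>i t. \<not> on_bdry i t \<longrightarrow> mu i t = 0) \<and>
      (\<forall>i<4. \<exists>q :: real poly. degree q \<le> k \<and>
          (\<forall>t\<in>{0..1}. mu i t = ncross_s (pg_normal a u v i) (poly q t)))}"

definition trace_s :: "real^2 \<Rightarrow> real^2 \<Rightarrow> real^2 \<Rightarrow> (real^2 \<Rightarrow> real) \<Rightarrow> bfield" where
  "trace_s a u v p = (\<lambda>i t. if on_bdry i t
      then ncross_s (pg_normal a u v i) (p (pg_edge a u v i t)) else 0)"
definition trace_t :: "real^2 \<Rightarrow> real^2 \<Rightarrow> real^2 \<Rightarrow> (real^2 \<Rightarrow> real^2) \<Rightarrow> bfield" where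
  "trace_t a u v w = (\<lambda>i t. if on_bdry i t
      then tang (pg_normal a u v i) (w (pg_edge a u v i t)) else 0)"

definition I_M :: "nat \<Rightarrow> real^2 \<Rightarrow> real^2 \<Rightarrow> real^2 \<Rightarrow> int" where
  "I_M k a u v =
     int (bdim (Mspace k a u v))
   - int (bdim {trace_s a u v p | p. poly2 k p \<and> (\<forall>x\<in>pgram a u v. curl_s p x = 0)})
   - int (bdim {trace_t a u v w | w. poly2 k (\<lambda>x. w x $ 1) \<and> poly2 k (\<lambda>x. w x $ 2)
                 \<and> (\<forall>x\<in>pgram a u v. curl_v w x = 0)})"

end

theory Submission
  imports Defs
begin

text \<open>Pulling back along \<open>(\<sigma>, \<tau>) \<mapsto> a + \<sigma> u + \<tau> v\<close> identifies \<open>K\<close> with the unit square.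
  On each edge \<open>M(\<partial>K)\<close> is \<open>n \<times> P\<^sub>k\<close>, so \<open>dim M(\<partial>K) = 4(k + 1)\<close>. A curl-free
  \<open>p \<in> P\<^sub>k\<close> has vanishing gradient, hence is constant on \<open>K\<close>, and its traces form a line.
  A curl-free \<open>w \<in> [P\<^sub>k]\<^sup>2\<close> is the gradient of a potential \<open>\<phi> \<in> P\<^sub>k\<^sub>+\<^sub>1\<close>, obtained by
  integrating on the unit square, and \<open>n \<times> w \<times> n\<close> on an edge is the tangential derivative
  of \<open>\<phi>\<close> there; conversely the gradient of every monomial \<open>\<sigma>\<^sup>m \<tau>\<^sup>n\<close> with
  \<open>m + n \<le> k + 1\<close> is admissible. On the boundary of the square
  \<open>\<sigma>\<^sup>m \<tau>\<^sup>n = \<sigma>\<^sup>m \<tau> + \<sigma> \<tau>\<^sup>n - \<sigma> \<tau>\<close> for \<open>m, n \<ge> 1\<close>, which leaves the \<open>4k + 1\<close>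
  independent tangential traces of \<open>\<sigma>\<^sup>m\<close>, \<open>\<tau>\<^sup>n\<close> (\<open>1 \<le> m, n \<le> k + 1\<close>),
  \<open>\<sigma>\<^sup>m \<tau>\<close> (\<open>1 \<le> m \<le> k\<close>) and \<open>\<sigma> \<tau>\<^sup>n\<close> (\<open>2 \<le> n \<le> k\<close>).
  Hence \<open>I\<^sub>M = 4(k + 1) - 1 - (4k + 1) = 2\<close>.\<close>

section \<open>Plane geometry of the parallelogram\<close>

lemma inner_real2: "(x::real^2) \<bullet> y = x$1 * y$1 + x$2 * y$2"
  by (simp add: inner_vec_def sum_2)

lemma vec2_eq_iff: "(x::real^2) = y \<longleftrightarrow> x$1 = y$1 \<and> x$2 = y$2"
  by (simp add: vec_eq_iff forall_2)

lemma norm_real2: "norm (x::real^2) = sqrt ((x$1)^2 + (x$2)^2)"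
  by (simp add: norm_eq_sqrt_inner inner_real2 power2_eq_square)

definition det2 :: "real^2 \<Rightarrow> real^2 \<Rightarrow> real" where
  "det2 u v = u$1 * v$2 - u$2 * v$1"

definition perp :: "real^2 \<Rightarrow> real^2" where
  "perp e = vector [- e$2, e$1]"

lemma inner_perp_self [simp]: "perp e \<bullet> perp e = e \<bullet> e"
  by (simp add: perp_def inner_real2)

lemma norm_perp [simp]: "norm (perp e) = norm e"
  by (simp add: norm_eq_sqrt_inner)

lemma det2_nonzero_if_not_collinear:
  assumes "\<not> collinear {0, u, v}"
  shows "det2 u v \<noteq> 0"
proof
  assume d: "det2 u v = 0"
  have "u \<noteq> 0" and not_multiple: "\<And>c. v \<noteq> c *\<^sub>R u"
    using assms by (auto simp: collinear_lemma)
  then consider "u$1 \<noteq> 0" | "u$2 \<noteq> 0" by (auto simp: vec2_eq_iff)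
  then show False
  proof cases
    case 1
    then have "v = (v$1 / u$1) *\<^sub>R u" using d by (auto simp: vec2_eq_iff det2_def field_simps)
    with not_multiple show False by blast
  next
    case 2
    then have "v = (v$2 / u$2) *\<^sub>R u" using d by (auto simp: vec2_eq_iff det2_def field_simps)
    with not_multiple show False by blast
  qed
qed

lemma dual_basis_real2:
  assumes "\<not> collinear {0, u, v}"
  obtains \<alpha> \<beta> :: "real^2" where "\<alpha> \<bullet> u = 1" "\<alpha> \<bullet> v = 0" "\<beta> \<bullet> u = 0" "\<beta> \<bullet> v = 1"
proof
  have d: "det2 u v \<noteq> 0" using det2_nonzero_if_not_collinear[OF assms] .
  let ?p = "vector [v$2, - v$1] :: real^2" and ?q = "vector [- u$2, u$1] :: real^2"
  have pq: "?p \<bullet> u = det2 u v" "?p \<bullet> v = 0" "?q \<bullet> u = 0" "?q \<bullet> v = det2 u v"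
    by (simp_all add: inner_real2 det2_def algebra_simps)
  show "((1 / det2 u v) *\<^sub>R ?p) \<bullet> u = 1" "((1 / det2 u v) *\<^sub>R ?p) \<bullet> v = 0"
    "((1 / det2 u v) *\<^sub>R ?q) \<bullet> u = 0" "((1 / det2 u v) *\<^sub>R ?q) \<bullet> v = 1"
    using d by (simp_all add: pq)
qed

lemma orthogonal_imp_multiple_perp:
  assumes "e \<noteq> 0" "x \<bullet> e = 0"
  shows "x = ((x \<bullet> perp e) / (e \<bullet> e)) *\<^sub>R perp e"
proof -
  have ee: "(e$1)^2 + (e$2)^2 \<noteq> 0" using assms(1) by (auto simp: vec2_eq_iff)
  have "x$1 * e$1 + x$2 * e$2 = 0" using assms(2) by (simp add: inner_real2)
  with ee show ?thesis
    by (simp add: vec2_eq_iff perp_def inner_real2 power2_eq_square field_simps) algebra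
qed

lemma unique_unit_normal:
  fixes e r :: "real^2"
  assumes "r \<bullet> perp e \<noteq> 0"
  shows "\<exists>!n. norm n = 1 \<and> n \<bullet> e = 0 \<and> n \<bullet> r < 0"
proof -
  let ?p = "perp e"
  have "e \<noteq> 0" using assms by (auto simp: perp_def inner_real2)
  have pe: "?p \<bullet> e = 0" by (simp add: perp_def inner_real2)
  have np: "norm ?p > 0" using \<open>e \<noteq> 0\<close> by simp
  have multiple: "\<exists>c. x = c *\<^sub>R ?p" if "x \<bullet> e = 0" for x
    using orthogonal_imp_multiple_perp[OF \<open>e \<noteq> 0\<close> that] by blast
  define n where "n = (- sgn (r \<bullet> ?p) / norm ?p) *\<^sub>R ?p"
  have "sgn (r \<bullet> ?p) * (r \<bullet> ?p) > 0"
    using assms by (simp add: sgn_mult_self_eq abs_sgn mult.commute sgn_real_def)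
  then have n: "norm n = 1 \<and> n \<bullet> e = 0 \<and> n \<bullet> r < 0"
    using np assms pe by (auto simp: n_def abs_sgn inner_commute field_simps)
  have "m = n" if m: "norm m = 1" "m \<bullet> e = 0" "m \<bullet> r < 0" for m
  proof -
    obtain a where a: "m = a *\<^sub>R ?p" using multiple[OF m(2)] by blast
    obtain b where b: "n = b *\<^sub>R ?p" using multiple n by blast
    have "\<bar>a\<bar> * norm ?p = \<bar>b\<bar> * norm ?p" using m(1) n a b by simp
    then have "\<bar>a\<bar> = \<bar>b\<bar>" using np by simp
    moreover have "a * (r \<bullet> ?p) < 0" "b * (r \<bullet> ?p) < 0"
      using m(3) n a b by (simp_all add: inner_commute)
    ultimately have "a = b" by (smt (verit) mult_minus_left)
    then show ?thesis using a b by simp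
  qed
  then show ?thesis using n by blast
qed

lemma expansion_unit_perp:
  assumes "norm n = 1"
  shows "w = (w \<bullet> n) *\<^sub>R n + (w \<bullet> perp n) *\<^sub>R perp n"
proof -
  have n: "(n$1)^2 + (n$2)^2 = 1" using assms by (simp add: norm_real2)
  have "w$1 = (w$1 * n$1 + w$2 * n$2) * n$1 + (w$2 * n$1 - w$1 * n$2) * (- n$2)"
    using n by algebra
  moreover have "w$2 = (w$1 * n$1 + w$2 * n$2) * n$2 + (w$2 * n$1 - w$1 * n$2) * n$1"
    using n by algebra
  ultimately show ?thesis by (simp add: vec2_eq_iff perp_def inner_real2 algebra_simps)
qed

lemma tang_eq_projection:
  assumes "norm n = 1" "n \<bullet> d = 0" "d \<noteq> 0"
  shows "tang n w = ((w \<bullet> d) / (d \<bullet> d)) *\<^sub>R d"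
proof -
  have "n \<noteq> 0" using assms(1) by auto
  then obtain c where c: "d = c *\<^sub>R perp n"
    using orthogonal_imp_multiple_perp[of n d] assms(2) by (auto simp: inner_commute)
  have "c \<noteq> 0" using c assms(3) by auto
  have "tang n w = (w \<bullet> perp n) *\<^sub>R perp n"
    using expansion_unit_perp[OF assms(1), of w] by (simp add: tang_def algebra_simps)
  also have "\<dots> = ((w \<bullet> d) / (d \<bullet> d)) *\<^sub>R d"
    using \<open>c \<noteq> 0\<close> assms(1) by (simp add: c power2_norm_eq_inner[symmetric] power2_eq_square)
  finally show ?thesis .
qed

lemma less_4_cases:
  assumes "i < (4::nat)"
  obtains "i = 0" | "i = 1" | "i = 2" | "i = 3"
  using assms by linarith

definition pg_dir :: "real^2 \<Rightarrow> real^2 \<Rightarrow> nat \<Rightarrow> real^2" where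
  "pg_dir u v i = (if even i then u else v)"

lemma pg_edge_vector:
  assumes "i < 4"
  shows "pg_vertex a u v (Suc i) - pg_vertex a u v i = pg_dir u v i
    \<or> pg_vertex a u v (Suc i) - pg_vertex a u v i = - pg_dir u v i"
  using assms by (cases rule: less_4_cases) (simp_all add: pg_vertex_def pg_dir_def)

lemma pg_centre_inner_perp_edge:
  assumes "i < 4"
  shows "((a + (1/2) *\<^sub>R (u + v)) - pg_vertex a u v i)
      \<bullet> perp (pg_vertex a u v (Suc i) - pg_vertex a u v i) = det2 u v / 2"
  using assms
  by (cases rule: less_4_cases) (simp_all add: pg_vertex_def inner_real2 perp_def det2_def algebra_simps)

lemma pg_normal_unit_orth:
  assumes "\<not> collinear {0, u, v}" "i < 4"
  shows "norm (pg_normal a u v i) = 1" "pg_normal a u v i \<bullet> pg_dir u v i = 0"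
proof -
  let ?e = "pg_vertex a u v (Suc i) - pg_vertex a u v i"
  have "((a + (1/2) *\<^sub>R (u + v)) - pg_vertex a u v i) \<bullet> perp ?e \<noteq> 0"
    unfolding pg_centre_inner_perp_edge[OF assms(2)]
    using det2_nonzero_if_not_collinear[OF assms(1)] by simp
  then have "norm (pg_normal a u v i) = 1 \<and> pg_normal a u v i \<bullet> ?e = 0"
    unfolding pg_normal_def using theI'[OF unique_unit_normal] by blast
  then show "norm (pg_normal a u v i) = 1" "pg_normal a u v i \<bullet> pg_dir u v i = 0"
    using pg_edge_vector[OF assms(2), of a u v] by (auto simp: inner_minus_right)
qed

lemma pg_dir_nonzero:
  assumes "\<not> collinear {0, u, v}"
  shows "pg_dir u v i \<noteq> 0"
  using det2_nonzero_if_not_collinear[OF assms] by (auto simp: pg_dir_def det2_def)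

text \<open>Edge points in the coordinates \<open>a + \<sigma> u + \<tau> v\<close> of \<open>pgram\<close>, with the trivial
  coefficients kept so that they match that pattern literally.\<close>

lemma pg_edge_simps:
  "pg_edge a u v 0 t = a + t *\<^sub>R u + 0 *\<^sub>R v"
  "pg_edge a u v 1 t = a + 1 *\<^sub>R u + t *\<^sub>R v"
  "pg_edge a u v 2 t = a + (1 - t) *\<^sub>R u + 1 *\<^sub>R v"
  "pg_edge a u v 3 t = a + 0 *\<^sub>R u + (1 - t) *\<^sub>R v"
  by (simp_all add: pg_edge_def pg_vertex_def algebra_simps)

lemma pg_edge_in_pgram:
  assumes "i < 4" "t \<in> {0..1}"
  shows "pg_edge a u v i t \<in> pgram a u v"
proof -
  have t: "t \<in> {0..1}" "1 - t \<in> {0..1}" "0 \<in> {0..1::real}" "1 \<in> {0..1::real}"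
    using assms(2) by auto
  have "\<exists>s r. pg_edge a u v i t = a + s *\<^sub>R u + r *\<^sub>R v \<and> s \<in> {0..1} \<and> r \<in> {0..1}"
    using assms(1)
  proof (cases rule: less_4_cases)
    case 1 show ?thesis unfolding 1 pg_edge_simps using t by blast
  next
    case 2 show ?thesis unfolding 2 pg_edge_simps using t by blast
  next
    case 3 show ?thesis unfolding 3 pg_edge_simps using t by blast
  next
    case 4 show ?thesis unfolding 4 pg_edge_simps using t by blast
  qed
  then show ?thesis unfolding pgram_def by blast
qed

lemma pgram_segment_from_vertex:
  assumes "y \<in> pgram a u v" "h \<in> {0..1}"
  shows "a + h *\<^sub>R (y - a) \<in> pgram a u v"
proof -
  obtain s t where st: "y = a + s *\<^sub>R u + t *\<^sub>R v" "s \<in> {0..1}" "t \<in> {0..1}"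
    using assms(1) by (auto simp: pgram_def)
  have "a + h *\<^sub>R (y - a) = a + (h * s) *\<^sub>R u + (h * t) *\<^sub>R v"
    using st by (simp add: algebra_simps)
  moreover have "h * s \<in> {0..1}" "h * t \<in> {0..1}"
    using st assms(2) by (auto intro: mult_le_one)
  ultimately show ?thesis unfolding pgram_def by blast
qed

section \<open>Polynomial functions\<close>

lemma poly_eq_sum_coeff_atMost:
  fixes q :: "real poly"
  assumes "degree q \<le> k"
  shows "poly q t = (\<Sum>m\<le>k. coeff q m * t^m)"
  unfolding poly_altdef using assms by (intro sum.mono_neutral_left) (auto simp: coeff_eq_0)

lemma polyfun_coeffs_zero_if_vanishes_on_infinite:
  fixes c :: "nat \<Rightarrow> 'a::{idom,real_normed_div_algebra}"
  assumes "infinite S" "\<And>x. x \<in> S \<Longrightarrow> (\<Sum>i\<le>n. c i * x^i) = 0"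
  shows "\<forall>i\<le>n. c i = 0"
proof -
  have "S \<subseteq> {x. (\<Sum>i\<le>n. c i * x^i) = 0}" using assms(2) by blast
  then have "infinite {x. (\<Sum>i\<le>n. c i * x^i) = 0}" using assms(1) by (metis finite_subset)
  then show ?thesis by (simp add: polyfun_finite_roots)
qed

lemma coeffs_zero_if_vanishes_on_unit_interval:
  fixes c :: "nat \<Rightarrow> real"
  assumes "\<And>t. t \<in> {0..1} \<Longrightarrow> (\<Sum>i<n. c i * t^i) = 0" "i < n"
  shows "c i = 0"
proof -
  obtain m where n: "n = Suc m" using assms(2) by (cases n) auto
  have "\<forall>i\<le>m. c i = 0"
  proof (rule polyfun_coeffs_zero_if_vanishes_on_infinite)
    show "infinite {0..1::real}" by simp
    show "(\<Sum>i\<le>m. c i * t^i) = 0" if "t \<in> {0..1}" for t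
      using assms(1)[OF that] by (simp add: n lessThan_Suc_atMost)
  qed
  then show ?thesis using assms(2) n by simp
qed

lemma coeffs_zero_if_vanishes_on_unit_interval_reflected:
  fixes c :: "nat \<Rightarrow> real"
  assumes "\<And>t. t \<in> {0..1} \<Longrightarrow> (\<Sum>i<n. c i * (1 - t)^i) = 0" "i < n"
  shows "c i = 0"
proof (rule coeffs_zero_if_vanishes_on_unit_interval[OF _ assms(2)])
  fix t :: real assume "t \<in> {0..1}"
  then show "(\<Sum>i<n. c i * t^i) = 0" using assms(1)[of "1 - t"] by simp
qed

lemma coeffs_zero_if_vanishes_on_unit_interval_const:
  fixes c :: "nat \<Rightarrow> real"
  assumes "\<And>t. t \<in> {0..1} \<Longrightarrow> C + (\<Sum>m\<in>{1..<n}. c m * t^m) = 0" "i \<in> {1..<n}"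
  shows "c i = 0"
proof -
  define b where "b m = (if m = 0 then C else c m)" for m
  have "{..<n} = insert 0 {1..<n}" using assms(2) by auto
  then have "(\<Sum>m<n. b m * t^m) = C + (\<Sum>m\<in>{1..<n}. c m * t^m)" for t :: real
    by (simp add: b_def)
  then have "b i = 0" using assms by (intro coeffs_zero_if_vanishes_on_unit_interval[where c = b and n = n]) auto
  then show ?thesis using assms(2) by (simp add: b_def)
qed

type_synonym monomials = "(real \<times> nat \<times> nat) list"

fun meval :: "monomials \<Rightarrow> real \<Rightarrow> real \<Rightarrow> real" where
  "meval [] x y = 0"
| "meval ((c, i, j) # ms) x y = c * x^i * y^j + meval ms x y"

definition mdeg_le :: "nat \<Rightarrow> monomials \<Rightarrow> bool" where
  "mdeg_le K ms \<longleftrightarrow> list_all (\<lambda>(c, i, j). i + j \<le> K) ms"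

lemma monomials_induct: "P [] \<Longrightarrow> (\<And>c i j ms. P ms \<Longrightarrow> P ((c, i, j) # ms)) \<Longrightarrow> P ms"
  by (induction ms) auto

lemma mdeg_le_simps [simp]:
  "mdeg_le K []"
  "mdeg_le K ((c, i, j) # ms) \<longleftrightarrow> i + j \<le> K \<and> mdeg_le K ms"
  "mdeg_le K (ms @ ms') \<longleftrightarrow> mdeg_le K ms \<and> mdeg_le K ms'"
  by (simp_all add: mdeg_le_def)

lemma mdeg_le_mono: "mdeg_le K ms \<Longrightarrow> K \<le> K' \<Longrightarrow> mdeg_le K' ms"
  by (induction ms rule: monomials_induct) auto

lemma meval_append [simp]: "meval (ms @ ms') x y = meval ms x y + meval ms' x y"
  by (induction ms rule: monomials_induct) auto

fun mmult :: "monomials \<Rightarrow> monomials \<Rightarrow> monomials" where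
  "mmult [] ms = []"
| "mmult ((c, i, j) # ms1) ms = map (\<lambda>(d, k, l). (c * d, i + k, j + l)) ms @ mmult ms1 ms"

lemma meval_mmult: "meval (mmult ms1 ms2) x y = meval ms1 x y * meval ms2 x y"
proof (induction ms1 ms2 rule: mmult.induct)
  case (2 c i j ms1 ms)
  have "meval (map (\<lambda>(d, k, l). (c * d, i + k, j + l)) ms) x y = c * x^i * y^j * meval ms x y"
    by (induction ms rule: monomials_induct) (auto simp: power_add algebra_simps)
  with 2 show ?case by (simp add: algebra_simps)
qed simp

lemma mdeg_le_mmult: "mdeg_le K ms1 \<Longrightarrow> mdeg_le L ms2 \<Longrightarrow> mdeg_le (K + L) (mmult ms1 ms2)"
proof (induction ms1 ms2 rule: mmult.induct)
  case (2 c i j ms1 ms)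
  have "mdeg_le (K + L) (map (\<lambda>(d, k, l). (c * d, i + k, j + l)) ms)"
    using 2(2,3) by (induction ms rule: monomials_induct) auto
  with 2 show ?case by simp
qed simp

definition bipoly :: "nat \<Rightarrow> (real \<Rightarrow> real \<Rightarrow> real) \<Rightarrow> bool" where
  "bipoly K f \<longleftrightarrow> (\<exists>ms. mdeg_le K ms \<and> (\<forall>x y. f x y = meval ms x y))"

lemma bipoly_mono: "bipoly K f \<Longrightarrow> K \<le> K' \<Longrightarrow> bipoly K' f"
  by (meson bipoly_def mdeg_le_mono)

lemma bipoly_meval: "mdeg_le K ms \<Longrightarrow> bipoly K (meval ms)"
  by (auto simp: bipoly_def)

lemma bipoly_monomial: "i + j \<le> K \<Longrightarrow> bipoly K (\<lambda>x y. c * x^i * y^j)"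
  unfolding bipoly_def by (rule exI[of _ "[(c, i, j)]"]) simp

lemma bipoly_const: "bipoly K (\<lambda>x y. c)"
  using bipoly_monomial[of 0 0 K c] by simp

lemma bipoly_add: "bipoly K f \<Longrightarrow> bipoly K g \<Longrightarrow> bipoly K (\<lambda>x y. f x y + g x y)"
  unfolding bipoly_def by (metis mdeg_le_simps(3) meval_append)

lemma bipoly_mult: "bipoly K f \<Longrightarrow> bipoly L g \<Longrightarrow> bipoly (K + L) (\<lambda>x y. f x y * g x y)"
  unfolding bipoly_def by (metis mdeg_le_mmult meval_mmult)

lemma bipoly_scale: "bipoly K f \<Longrightarrow> bipoly K (\<lambda>x y. c * f x y)"
  using bipoly_mult[OF bipoly_const[of 0 c]] by simp

lemma bipoly_power: "bipoly K f \<Longrightarrow> bipoly (K * n) (\<lambda>x y. f x y ^ n)"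
proof (induction n)
  case 0 then show ?case using bipoly_const[of 0 1] by simp
next
  case (Suc n)
  then have "bipoly (K + K * n) (\<lambda>x y. f x y * f x y ^ n)" by (intro bipoly_mult)
  then show ?case by (simp add: algebra_simps)
qed

lemma bipoly_sum:
  "finite A \<Longrightarrow> (\<And>a. a \<in> A \<Longrightarrow> bipoly K (f a)) \<Longrightarrow> bipoly K (\<lambda>x y. \<Sum>a\<in>A. f a x y)"
  by (induction A rule: finite_induct) (auto intro: bipoly_add bipoly_const[of K 0, simplified])

lemma bipoly_affine: "bipoly 1 (\<lambda>x y. c0 + c1 * x + c2 * y)"
  using bipoly_add[OF bipoly_add[OF bipoly_const bipoly_monomial[of 1 0 1 c1]] bipoly_monomial[of 0 1 1 c2]]
  by simp

lemma bipoly_compose: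
  assumes "bipoly K g" "bipoly 1 p" "bipoly 1 q"
  shows "bipoly K (\<lambda>x y. g (p x y) (q x y))"
proof -
  obtain ms where ms: "mdeg_le K ms" "\<And>x y. g x y = meval ms x y"
    using assms(1) by (auto simp: bipoly_def)
  have "bipoly K (\<lambda>x y. meval ms (p x y) (q x y))"
    using ms(1)
  proof (induction ms rule: monomials_induct)
    case (2 c i j ms)
    have "bipoly ((0 + 1 * i) + 1 * j) (\<lambda>x y. c * p x y ^ i * q x y ^ j)"
      by (intro bipoly_mult bipoly_const bipoly_power assms(2,3))
    then have "bipoly K (\<lambda>x y. c * p x y ^ i * q x y ^ j)"
      using 2(2) by (auto elim: bipoly_mono)
    with 2 show ?case by (auto intro: bipoly_add)
  qed (simp add: bipoly_const[of K 0, simplified])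
  then show ?thesis by (simp add: ms(2))
qed

lemma triangular_sum_delta:
  fixes d x y :: real
  assumes "i0 + j0 \<le> k"
  shows "(\<Sum>i\<le>k. \<Sum>j\<le>k-i. (if i = i0 \<and> j = j0 then d else 0) * x^i * y^j) = d * x^i0 * y^j0"
proof -
  have "(\<Sum>j\<le>k-i. (if i = i0 \<and> j = j0 then d else 0) * x^i * y^j)
      = (if i = i0 then d * x^i0 * y^j0 else 0)" for i
  proof (cases "i = i0")
    case True
    then have "(\<Sum>j\<le>k-i. (if i = i0 \<and> j = j0 then d else 0) * x^i * y^j)
        = (\<Sum>j\<le>k-i. if j = j0 then d * x^i0 * y^j0 else 0)"
      by (intro sum.cong) auto
    with True assms show ?thesis by (simp add: sum.delta')
  qed simp
  then show ?thesis using assms by (simp add: sum.delta')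
qed

lemma meval_triangular_sum:
  "mdeg_le k ms \<Longrightarrow> \<exists>c. \<forall>x y. meval ms x y = (\<Sum>i\<le>k. \<Sum>j\<le>k-i. c i j * x^i * y^j)"
proof (induction ms rule: monomials_induct)
  case 1 then show ?case by (intro exI[of _ "\<lambda>i j. 0"]) simp
next
  case (2 d i0 j0 ms)
  then obtain c where c: "\<forall>x y. meval ms x y = (\<Sum>i\<le>k. \<Sum>j\<le>k-i. c i j * x^i * y^j)" by auto
  have ij: "i0 + j0 \<le> k" using 2 by simp
  show ?case
    using c triangular_sum_delta[OF ij, of d]
    by (intro exI[of _ "\<lambda>i j. c i j + (if i = i0 \<and> j = j0 then d else 0)"])
       (simp add: sum.distrib distrib_right)
qed

lemma poly2_monomials:
  assumes "poly2 k p"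
  obtains ms where "mdeg_le k ms" "\<And>x. p x = meval ms (x$1) (x$2)"
proof -
  obtain c where c: "\<And>x. p x = (\<Sum>i\<le>k. \<Sum>j\<le>k - i. c i j * (x$1)^i * (x$2)^j)"
    using assms by (auto simp: poly2_def)
  have "bipoly k (\<lambda>x y. \<Sum>i\<le>k. \<Sum>j\<le>k-i. c i j * x^i * y^j)"
    by (intro bipoly_sum bipoly_monomial) auto
  then show ?thesis using that c by (auto simp: bipoly_def)
qed

lemma poly2_if_bipoly:
  assumes "bipoly k g"
  shows "poly2 k (\<lambda>x. g (x$1) (x$2))"
proof -
  obtain ms where ms: "mdeg_le k ms" "\<forall>x y. g x y = meval ms x y"
    using assms by (auto simp: bipoly_def)
  then show ?thesis using meval_triangular_sum[OF ms(1)] unfolding poly2_def by auto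
qed

section \<open>Derivatives and primitives\<close>

text \<open>A constant term differentiates to the zero monomial \<open>(0, 0, 0)\<close> rather than to
  \<open>(0, 0 - 1, j)\<close>, so that differentiation lowers the degree bound.\<close>

fun mdx :: "monomials \<Rightarrow> monomials" where
  "mdx [] = []"
| "mdx ((c, i, j) # ms) = (if i = 0 then (0, 0, 0) else (c * real i, i - 1, j)) # mdx ms"

fun mdy :: "monomials \<Rightarrow> monomials" where
  "mdy [] = []"
| "mdy ((c, i, j) # ms) = (if j = 0 then (0, 0, 0) else (c * real j, i, j - 1)) # mdy ms"

lemma mdx_append [simp]: "mdx (ms @ ms') = mdx ms @ mdx ms'"
  and mdy_append [simp]: "mdy (ms @ ms') = mdy ms @ mdy ms'"
  by (induction ms rule: monomials_induct) auto

lemma meval_mdx_Cons [simp]: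
  "meval (mdx ((c, i, j) # ms)) x y = c * real i * x^(i - 1) * y^j + meval (mdx ms) x y"
  and meval_mdy_Cons [simp]:
  "meval (mdy ((c, i, j) # ms)) x y = c * real j * x^i * y^(j - 1) + meval (mdy ms) x y"
  by simp_all

declare mdx.simps(2) [simp del] mdy.simps(2) [simp del]

lemma mdeg_le_mdx: "mdeg_le (Suc K) ms \<Longrightarrow> mdeg_le K (mdx ms)"
  and mdeg_le_mdy: "mdeg_le (Suc K) ms \<Longrightarrow> mdeg_le K (mdy ms)"
  by (induction ms rule: monomials_induct) (auto simp: mdx.simps mdy.simps)

lemma meval_mdy_mdx: "meval (mdy (mdx ms)) x y = meval (mdx (mdy ms)) x y"
  by (induction ms rule: monomials_induct) (auto simp: mdx.simps mdy.simps)

lemma DERIV_meval_line: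
  "((\<lambda>h. meval ms (x0 + h * d1) (y0 + h * d2)) has_real_derivative
     d1 * meval (mdx ms) (x0 + h * d1) (y0 + h * d2) + d2 * meval (mdy ms) (x0 + h * d1) (y0 + h * d2)) (at h)"
proof (induction ms rule: monomials_induct)
  case (2 c i j ms)
  have "((\<lambda>h. c * (x0 + h * d1)^i * (y0 + h * d2)^j) has_real_derivative
      d1 * (c * real i * (x0 + h * d1)^(i - 1) * (y0 + h * d2)^j)
      + d2 * (c * real j * (x0 + h * d1)^i * (y0 + h * d2)^(j - 1))) (at h)"
    by (auto intro!: derivative_eq_intros simp: algebra_simps)
  from DERIV_add[OF this 2] show ?case by (simp add: algebra_simps)
qed simp

lemma DERIV_meval_x: "((\<lambda>x. meval ms x y) has_real_derivative meval (mdx ms) x y) (at x)"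
  using DERIV_meval_line[of ms 0 1 y 0 x] by simp

lemma DERIV_meval_y: "((\<lambda>y. meval ms x y) has_real_derivative meval (mdy ms) x y) (at y)"
  using DERIV_meval_line[of ms x 0 0 1 y] by simp

lemma pdx_meval:
  assumes "\<And>x. p x = meval ms (x$1) (x$2)"
  shows "pdx p x = meval (mdx ms) (x$1) (x$2)"
proof -
  have "(\<lambda>s. p (x + s *\<^sub>R axis 1 1)) = (\<lambda>s. meval ms (x$1 + s * 1) (x$2 + s * 0))"
    using assms by (simp add: axis_def)
  then show ?thesis
    unfolding pdx_def using DERIV_imp_deriv[OF DERIV_meval_line[of ms "x$1" 1 "x$2" 0 0]] by simp
qed

lemma pdy_meval:
  assumes "\<And>x. p x = meval ms (x$1) (x$2)"
  shows "pdy p x = meval (mdy ms) (x$1) (x$2)"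
proof -
  have "(\<lambda>s. p (x + s *\<^sub>R axis 2 1)) = (\<lambda>s. meval ms (x$1 + s * 0) (x$2 + s * 1))"
    using assms by (simp add: axis_def)
  then show ?thesis
    unfolding pdy_def using DERIV_imp_deriv[OF DERIV_meval_line[of ms "x$1" 0 "x$2" 1 0]] by simp
qed

lemma DERIV_zero_unit_interval_const:
  assumes "\<And>t. t \<in> {0..1} \<Longrightarrow> (g has_real_derivative 0) (at t)" "\<tau> \<in> {0..1}"
  shows "g \<tau> = g 0"
proof -
  obtain c where "\<forall>t\<in>{0..1}. g t = c"
    using has_field_derivative_zero_constant[of "{0..1}" g] assms(1)
    by (metis convex_real_interval(5) has_field_derivative_at_within)
  then show ?thesis using assms(2) by simp
qed

text \<open>\<open>mprim_x0 A\<close> is \<open>\<integral>\<^sub>0\<^sup>x A(s,0) ds\<close> and \<open>mprim_y B\<close> is \<open>\<integral>\<^sub>0\<^sup>y B(x,s) ds\<close>.\<close>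

definition mprim_x0 :: "monomials \<Rightarrow> monomials" where
  "mprim_x0 A = map (\<lambda>(c, i, j). (c * 0^j / real (Suc i), Suc i, 0)) A"

definition mprim_y :: "monomials \<Rightarrow> monomials" where
  "mprim_y B = map (\<lambda>(c, i, j). (c / real (Suc j), i, Suc j)) B"

lemma mprim_simps [simp]:
  "mprim_x0 [] = []" "mprim_x0 ((c, i, j) # ms) = (c * 0^j / real (Suc i), Suc i, 0) # mprim_x0 ms"
  "mprim_y [] = []" "mprim_y ((c, i, j) # ms) = (c / real (Suc j), i, Suc j) # mprim_y ms"
  by (simp_all add: mprim_x0_def mprim_y_def)

lemma meval_mprim_x0:
  "meval (mdx (mprim_x0 A)) x y = meval A x 0" "meval (mdy (mprim_x0 A)) x y = 0"
  by (induction A rule: monomials_induct) auto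

lemma meval_mprim_y:
  "meval (mdy (mprim_y B)) x y = meval B x y"
  "meval (mdx (mprim_y B)) x 0 = 0"
  "meval (mdy (mdx (mprim_y B))) x y = meval (mdx B) x y"
  by (induction B rule: monomials_induct) (auto simp: mdx.simps mdy.simps)

lemma mdeg_le_mprim_x0: "mdeg_le k A \<Longrightarrow> mdeg_le (Suc k) (mprim_x0 A)"
  by (induction A rule: monomials_induct) auto

lemma mdeg_le_mprim_y: "mdeg_le k B \<Longrightarrow> mdeg_le (Suc k) (mprim_y B)"
  by (induction B rule: monomials_induct) auto

lemma poincare_unit_square:
  assumes "mdeg_le k A" "mdeg_le k B"
    and closed: "\<And>\<sigma> \<tau>. \<sigma> \<in> {0..1} \<Longrightarrow> \<tau> \<in> {0..1} \<Longrightarrow> meval (mdx B) \<sigma> \<tau> = meval (mdy A) \<sigma> \<tau>"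
  obtains \<Phi> where "mdeg_le (Suc k) \<Phi>"
    "\<And>\<sigma> \<tau>. \<sigma> \<in> {0..1} \<Longrightarrow> \<tau> \<in> {0..1} \<Longrightarrow> meval (mdx \<Phi>) \<sigma> \<tau> = meval A \<sigma> \<tau>"
    "\<And>\<sigma> \<tau>. \<sigma> \<in> {0..1} \<Longrightarrow> \<tau> \<in> {0..1} \<Longrightarrow> meval (mdy \<Phi>) \<sigma> \<tau> = meval B \<sigma> \<tau>"
proof
  show "mdeg_le (Suc k) (mprim_x0 A @ mprim_y B)" using assms(1,2) by (simp add: mdeg_le_mprim_x0 mdeg_le_mprim_y)
  fix \<sigma> \<tau> :: real assume st: "\<sigma> \<in> {0..1}" "\<tau> \<in> {0..1}"
  let ?g = "\<lambda>t. meval (mdx (mprim_y B)) \<sigma> t - meval A \<sigma> t"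
  have "(?g has_real_derivative 0) (at t)" if "t \<in> {0..1}" for t
    using DERIV_diff[OF DERIV_meval_y[of "mdx (mprim_y B)" \<sigma> t] DERIV_meval_y[of A \<sigma> t]]
      closed[OF st(1) that]
    by (simp add: meval_mprim_y)
  then have "?g \<tau> = ?g 0" using st(2) by (rule DERIV_zero_unit_interval_const)
  then show "meval (mdx (mprim_x0 A @ mprim_y B)) \<sigma> \<tau> = meval A \<sigma> \<tau>"
    by (simp add: meval_mprim_x0 meval_mprim_y)
  show "meval (mdy (mprim_x0 A @ mprim_y B)) \<sigma> \<tau> = meval B \<sigma> \<tau>"
    by (simp add: meval_mprim_x0 meval_mprim_y)
qed

section \<open>Curl-free polynomial fields on the parallelogram\<close>

lemma curl_free_scalar_const:
  assumes p: "poly2 k p" and curl: "\<forall>x\<in>pgram a u v. curl_s p x = 0" and y: "y \<in> pgram a u v"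
  shows "p y = p a"
proof -
  obtain ms where ms: "\<And>x. p x = meval ms (x$1) (x$2)" using poly2_monomials[OF p] by metis
  have grad: "meval (mdx ms) (x$1) (x$2) = 0" "meval (mdy ms) (x$1) (x$2) = 0"
    if "x \<in> pgram a u v" for x
    using curl that pdx_meval[of p ms x, OF ms] pdy_meval[of p ms x, OF ms]
    by (auto simp: curl_s_def vec2_eq_iff)
  define d where "d = y - a"
  let ?g = "\<lambda>h. meval ms (a$1 + h * d$1) (a$2 + h * d$2)"
  have "(?g has_real_derivative 0) (at h)" if "h \<in> {0..1}" for h
  proof -
    have "a + h *\<^sub>R d \<in> pgram a u v" using pgram_segment_from_vertex[OF y that] by (simp add: d_def)
    then show ?thesis using DERIV_meval_line[of ms "a$1" "d$1" "a$2" "d$2" h] grad[of "a + h *\<^sub>R d"]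
      by simp
  qed
  then have "?g 1 = ?g 0" by (rule DERIV_zero_unit_interval_const) auto
  then show ?thesis by (simp add: ms d_def)
qed

lemma DERIV_inner_field_line:
  fixes w :: "real^2 \<Rightarrow> real^2"
  assumes "\<And>x. w x $ 1 = meval M1 (x$1) (x$2)" "\<And>x. w x $ 2 = meval M2 (x$1) (x$2)"
    and q: "q = p + h *\<^sub>R d"
  shows "((\<lambda>h. w (p + h *\<^sub>R d) \<bullet> e) has_real_derivative
     e$1 * (d$1 * meval (mdx M1) (q$1) (q$2) + d$2 * meval (mdy M1) (q$1) (q$2))
   + e$2 * (d$1 * meval (mdx M2) (q$1) (q$2) + d$2 * meval (mdy M2) (q$1) (q$2))) (at h)"
proof -
  have "(\<lambda>h. w (p + h *\<^sub>R d) \<bullet> e) = (\<lambda>h. e$1 * meval M1 (p$1 + h * d$1) (p$2 + h * d$2)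
      + e$2 * meval M2 (p$1 + h * d$1) (p$2 + h * d$2))"
    by (simp add: inner_real2 assms(1,2) mult.commute)
  then show ?thesis
    using DERIV_add[OF DERIV_cmult[OF DERIV_meval_line[of M1 "p$1" "d$1" "p$2" "d$2" h], of "e$1"]
                       DERIV_cmult[OF DERIV_meval_line[of M2 "p$1" "d$1" "p$2" "d$2" h], of "e$2"]]
    by (simp add: q)
qed

lemma bipoly_pullback_inner:
  fixes w :: "real^2 \<Rightarrow> real^2" and e :: "real^2"
  assumes "poly2 k (\<lambda>x. w x $ 1)" "poly2 k (\<lambda>x. w x $ 2)"
  shows "bipoly k (\<lambda>\<sigma> \<tau>. w (a + \<sigma> *\<^sub>R u + \<tau> *\<^sub>R v) \<bullet> e)"
proof -
  obtain M1 where M1: "mdeg_le k M1" "\<And>x. w x $ 1 = meval M1 (x$1) (x$2)"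
    using poly2_monomials[OF assms(1)] by metis
  obtain M2 where M2: "mdeg_le k M2" "\<And>x. w x $ 2 = meval M2 (x$1) (x$2)"
    using poly2_monomials[OF assms(2)] by metis
  have "(\<lambda>\<sigma> \<tau>. w (a + \<sigma> *\<^sub>R u + \<tau> *\<^sub>R v) \<bullet> e) = (\<lambda>\<sigma> \<tau>.
      e$1 * meval M1 (a$1 + u$1 * \<sigma> + v$1 * \<tau>) (a$2 + u$2 * \<sigma> + v$2 * \<tau>)
    + e$2 * meval M2 (a$1 + u$1 * \<sigma> + v$1 * \<tau>) (a$2 + u$2 * \<sigma> + v$2 * \<tau>))"
    by (simp add: fun_eq_iff inner_real2 M1(2) M2(2) algebra_simps)
  then show ?thesis
    by (simp only:) (intro bipoly_add bipoly_scale bipoly_compose[OF bipoly_meval] bipoly_affine M1(1) M2(1))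
qed

text \<open>The curl of the pulled-back covariant components \<open>(w \<bullet> u, w \<bullet> v)\<close> is
  \<open>det2 u v\<close> times the curl of \<open>w\<close>.\<close>

lemma curl_free_pullback_closed:
  assumes M1: "\<And>x. w x $ 1 = meval M1 (x$1) (x$2)" and M2: "\<And>x. w x $ 2 = meval M2 (x$1) (x$2)"
    and curl: "\<forall>x\<in>pgram a u v. curl_v w x = 0"
    and A: "\<And>\<sigma> \<tau>. w (a + \<sigma> *\<^sub>R u + \<tau> *\<^sub>R v) \<bullet> u = meval A \<sigma> \<tau>"
    and B: "\<And>\<sigma> \<tau>. w (a + \<sigma> *\<^sub>R u + \<tau> *\<^sub>R v) \<bullet> v = meval B \<sigma> \<tau>"
    and st: "\<sigma> \<in> {0..1}" "\<tau> \<in> {0..1}"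
  shows "meval (mdx B) \<sigma> \<tau> = meval (mdy A) \<sigma> \<tau>"
proof -
  define x where "x = a + \<sigma> *\<^sub>R u + \<tau> *\<^sub>R v"
  have "x \<in> pgram a u v" using st unfolding pgram_def x_def by blast
  then have "curl_v w x = 0" using curl by blast
  then have sym: "meval (mdx M2) (x$1) (x$2) = meval (mdy M1) (x$1) (x$2)"
    using pdx_meval[of "\<lambda>y. w y $ 2" M2 x] pdy_meval[of "\<lambda>y. w y $ 1" M1 x] M1 M2
    by (simp add: curl_v_def)
  have "(\<lambda>t. meval A \<sigma> t) = (\<lambda>h. w ((a + \<sigma> *\<^sub>R u) + h *\<^sub>R v) \<bullet> u)" using A by simp
  then have "((\<lambda>t. meval A \<sigma> t) has_real_derivative
      u$1 * (v$1 * meval (mdx M1) (x$1) (x$2) + v$2 * meval (mdy M1) (x$1) (x$2))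
    + u$2 * (v$1 * meval (mdx M2) (x$1) (x$2) + v$2 * meval (mdy M2) (x$1) (x$2))) (at \<tau>)"
    using DERIV_inner_field_line[OF M1 M2, of x "a + \<sigma> *\<^sub>R u" \<tau> v u] by (simp add: x_def)
  from DERIV_unique[OF DERIV_meval_y this]
  have dA: "meval (mdy A) \<sigma> \<tau> = u$1 * (v$1 * meval (mdx M1) (x$1) (x$2) + v$2 * meval (mdy M1) (x$1) (x$2))
    + u$2 * (v$1 * meval (mdx M2) (x$1) (x$2) + v$2 * meval (mdy M2) (x$1) (x$2))" .
  have "(\<lambda>s. meval B s \<tau>) = (\<lambda>h. w ((a + \<tau> *\<^sub>R v) + h *\<^sub>R u) \<bullet> v)"
    using B by (simp add: algebra_simps)
  then have "((\<lambda>s. meval B s \<tau>) has_real_derivative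
      v$1 * (u$1 * meval (mdx M1) (x$1) (x$2) + u$2 * meval (mdy M1) (x$1) (x$2))
    + v$2 * (u$1 * meval (mdx M2) (x$1) (x$2) + u$2 * meval (mdy M2) (x$1) (x$2))) (at \<sigma>)"
    using DERIV_inner_field_line[OF M1 M2, of x "a + \<tau> *\<^sub>R v" \<sigma> u v] by (simp add: x_def algebra_simps)
  from DERIV_unique[OF DERIV_meval_x this]
  have dB: "meval (mdx B) \<sigma> \<tau> = v$1 * (u$1 * meval (mdx M1) (x$1) (x$2) + u$2 * meval (mdy M1) (x$1) (x$2))
    + v$2 * (u$1 * meval (mdx M2) (x$1) (x$2) + u$2 * meval (mdy M2) (x$1) (x$2))" .
  show ?thesis unfolding dA dB using sym by (simp add: algebra_simps)
qed

lemma curl_free_potential: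
  assumes "poly2 k (\<lambda>x. w x $ 1)" "poly2 k (\<lambda>x. w x $ 2)"
    and curl: "\<forall>x\<in>pgram a u v. curl_v w x = 0"
  obtains \<Phi> where "mdeg_le (Suc k) \<Phi>"
    "\<forall>\<sigma>\<in>{0..1}. \<forall>\<tau>\<in>{0..1}. w (a + \<sigma> *\<^sub>R u + \<tau> *\<^sub>R v) \<bullet> u = meval (mdx \<Phi>) \<sigma> \<tau>
        \<and> w (a + \<sigma> *\<^sub>R u + \<tau> *\<^sub>R v) \<bullet> v = meval (mdy \<Phi>) \<sigma> \<tau>"
proof -
  obtain M1 where M1: "\<And>x. w x $ 1 = meval M1 (x$1) (x$2)"
    using poly2_monomials[OF assms(1)] by metis
  obtain M2 where M2: "\<And>x. w x $ 2 = meval M2 (x$1) (x$2)"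
    using poly2_monomials[OF assms(2)] by metis
  obtain A where A: "mdeg_le k A" "\<And>\<sigma> \<tau>. w (a + \<sigma> *\<^sub>R u + \<tau> *\<^sub>R v) \<bullet> u = meval A \<sigma> \<tau>"
    using bipoly_pullback_inner[OF assms(1,2), of a u v u] by (auto simp: bipoly_def)
  obtain B where B: "mdeg_le k B" "\<And>\<sigma> \<tau>. w (a + \<sigma> *\<^sub>R u + \<tau> *\<^sub>R v) \<bullet> v = meval B \<sigma> \<tau>"
    using bipoly_pullback_inner[OF assms(1,2), of a u v v] by (auto simp: bipoly_def)
  obtain \<Phi> where "mdeg_le (Suc k) \<Phi>"
    "\<And>\<sigma> \<tau>. \<sigma> \<in> {0..1} \<Longrightarrow> \<tau> \<in> {0..1} \<Longrightarrow> meval (mdx \<Phi>) \<sigma> \<tau> = meval A \<sigma> \<tau>"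
    "\<And>\<sigma> \<tau>. \<sigma> \<in> {0..1} \<Longrightarrow> \<tau> \<in> {0..1} \<Longrightarrow> meval (mdy \<Phi>) \<sigma> \<tau> = meval B \<sigma> \<tau>"
    using poincare_unit_square[OF A(1) B(1) curl_free_pullback_closed[OF M1 M2 curl A(2) B(2)]]
    by metis
  with that A(2) B(2) show ?thesis by simp
qed

section \<open>Boundary fields\<close>

interpretation bf: vector_space bscale
  by unfold_locales (auto simp: bscale_def fun_eq_iff scaleR_add_right scaleR_add_left)

lemma (in vector_space) independent_image_if_coeffs_vanish:
  assumes fin: "finite I" and vanish: "\<And>c. (\<Sum>x\<in>I. scale (c x) (f x)) = 0 \<Longrightarrow> \<forall>x\<in>I. c x = 0"
  shows "independent (f ` I)" "card (f ` I) = card I"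
proof -
  have inj: "inj_on f I"
  proof (rule inj_onI, rule ccontr)
    fix x y assume xy: "x \<in> I" "y \<in> I" "f x = f y" "x \<noteq> y"
    define c where "c z = (if z = x then 1 else if z = y then -1 else (0::'a))" for z
    have "scale (c z) (f z) = (if z = x then f x else 0) - (if z = y then f y else 0)" for z
      using xy by (auto simp: c_def)
    then have "(\<Sum>z\<in>I. scale (c z) (f z)) = 0"
      using fin xy by (simp add: sum_subtractf sum.delta')
    then have "c x = 0" using vanish xy by blast
    then show False by (simp add: c_def)
  qed
  show "independent (f ` I)"
  proof (rule independent_if_scalars_zero)
    fix g v assume "(\<Sum>v\<in>f ` I. scale (g v) v) = 0" "v \<in> f ` I"
    then show "g v = 0" using vanish[of "\<lambda>x. g (f x)"] by (auto simp: sum.reindex[OF inj])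
  qed (use fin in simp)
  show "card (f ` I) = card I" using card_image[OF inj] .
qed

definition edge_field :: "(nat \<Rightarrow> real^2) \<Rightarrow> (nat \<Rightarrow> real \<Rightarrow> real) \<Rightarrow> bfield" where
  "edge_field E f = (\<lambda>i t. if on_bdry i t then f i t *\<^sub>R E i else 0)"

lemma edge_field_zero [simp]: "edge_field E (\<lambda>i t. 0) = 0"
  by (simp add: fun_eq_iff edge_field_def)

lemma edge_field_add_scale:
  "edge_field E (\<lambda>i t. c * f i t + g i t) = bscale c (edge_field E f) + edge_field E g"
  by (simp add: fun_eq_iff edge_field_def bscale_def scaleR_add_left)

lemma sum_edge_field:
  "finite X \<Longrightarrow> (\<Sum>x\<in>X. bscale (c x) (edge_field E (f x))) = edge_field E (\<lambda>i t. \<Sum>x\<in>X. c x * f x i t)"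
  by (induction X rule: finite_induct) (simp_all add: edge_field_add_scale)

lemma edge_field_eq_0D:
  assumes "edge_field E g = 0" "E i \<noteq> 0" "i < 4" "t \<in> {0..1}"
  shows "g i t = 0"
proof -
  have "edge_field E g i t = 0" using assms(1) by simp
  then show ?thesis using assms(2-4) by (simp add: edge_field_def on_bdry_def)
qed

section \<open>The space \<open>M(\<partial>K)\<close> and the scalar traces\<close>

definition pg_ncross :: "real^2 \<Rightarrow> real^2 \<Rightarrow> real^2 \<Rightarrow> nat \<Rightarrow> real^2" where
  "pg_ncross a u v i = ncross_s (pg_normal a u v i) 1"

lemma ncross_s_pg_normal: "ncross_s (pg_normal a u v i) c = c *\<^sub>R pg_ncross a u v i"
  by (simp add: pg_ncross_def ncross_s_def vec2_eq_iff)

lemma pg_ncross_nonzero: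
  assumes "\<not> collinear {0, u, v}" "i < 4"
  shows "pg_ncross a u v i \<noteq> 0"
  using pg_normal_unit_orth(1)[OF assms, of a] by (auto simp: pg_ncross_def ncross_s_def vec2_eq_iff norm_real2)

definition M_index :: "nat \<Rightarrow> (nat \<times> nat) set" where
  "M_index k = {..<4} \<times> {..k}"

definition M_basis :: "real^2 \<Rightarrow> real^2 \<Rightarrow> real^2 \<Rightarrow> nat \<times> nat \<Rightarrow> bfield" where
  "M_basis a u v x = edge_field (pg_ncross a u v) (\<lambda>i t. if i = fst x then t ^ snd x else 0)"

lemma sum_M_index:
  fixes c :: "nat \<times> nat \<Rightarrow> real"
  assumes "i < 4"
  shows "(\<Sum>x\<in>M_index k. c x * (if i = fst x then t ^ snd x else 0)) = (\<Sum>m\<le>k. c (i, m) * t^m)"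
proof -
  have "(\<Sum>x\<in>M_index k. c x * (if i = fst x then t ^ snd x else 0))
      = (\<Sum>e<4. \<Sum>m\<le>k. c (e, m) * (if i = e then t ^ m else 0))"
    unfolding M_index_def by (simp add: sum.cartesian_product split_def)
  also have "\<dots> = (\<Sum>e<4. if i = e then (\<Sum>m\<le>k. c (e, m) * t ^ m) else 0)"
    by (intro sum.cong) auto
  also have "\<dots> = (\<Sum>m\<le>k. c (i, m) * t^m)" using assms by (simp add: sum.delta)
  finally show ?thesis .
qed

lemma M_basis_in_Mspace:
  assumes "x \<in> M_index k"
  shows "M_basis a u v x \<in> Mspace k a u v"
  unfolding Mspace_def
proof (intro CollectI conjI allI impI)
  fix i t assume "\<not> on_bdry i t"
  then show "M_basis a u v x i t = 0" by (simp add: M_basis_def edge_field_def)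
next
  fix i :: nat assume i: "i < 4"
  let ?q = "if i = fst x then monom (1::real) (snd x) else 0"
  have "degree ?q \<le> k" using assms by (auto simp: M_index_def degree_monom_eq)
  moreover have "\<forall>t\<in>{0..1}. M_basis a u v x i t = ncross_s (pg_normal a u v i) (poly ?q t)"
    using i by (simp add: M_basis_def edge_field_def on_bdry_def poly_monom ncross_s_pg_normal)
  ultimately show "\<exists>q. degree q \<le> k \<and> (\<forall>t\<in>{0..1}. M_basis a u v x i t = ncross_s (pg_normal a u v i) (poly q t))"
    by blast
qed

lemma Mspace_subset_span:
  "Mspace k a u v \<subseteq> bf.span (M_basis a u v ` M_index k)"
proof
  fix \<mu> assume "\<mu> \<in> Mspace k a u v"
  then have off: "\<And>i t. \<not> on_bdry i t \<Longrightarrow> \<mu> i t = 0"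
    and "\<forall>i. \<exists>q. i < 4 \<longrightarrow> degree q \<le> k \<and> (\<forall>t\<in>{0..1}. \<mu> i t = ncross_s (pg_normal a u v i) (poly q t))"
    unfolding Mspace_def by auto
  then obtain Q where Q: "\<And>i. i < 4 \<Longrightarrow> degree (Q i) \<le> k"
    "\<And>i t. i < 4 \<Longrightarrow> t \<in> {0..1} \<Longrightarrow> \<mu> i t = ncross_s (pg_normal a u v i) (poly (Q i) t)"
    by metis
  let ?c = "\<lambda>x. coeff (Q (fst x)) (snd x)"
  have "\<mu> = edge_field (pg_ncross a u v) (\<lambda>i t. \<Sum>x\<in>M_index k. ?c x * (if i = fst x then t ^ snd x else 0))"
  proof (intro ext)
    fix i t
    show "\<mu> i t = edge_field (pg_ncross a u v) (\<lambda>i t. \<Sum>x\<in>M_index k. ?c x * (if i = fst x then t ^ snd x else 0)) i t"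
    proof (cases "on_bdry i t")
      case True
      then have i: "i < 4" and "t \<in> {0..1}" by (auto simp: on_bdry_def)
      then have "\<mu> i t = poly (Q i) t *\<^sub>R pg_ncross a u v i"
        using Q(2) by (simp add: ncross_s_pg_normal)
      then show ?thesis
        using True by (simp add: edge_field_def sum_M_index[OF i] poly_eq_sum_coeff_atMost[OF Q(1)[OF i]])
    qed (simp add: off edge_field_def)
  qed
  also have "\<dots> = (\<Sum>x\<in>M_index k. bscale (?c x) (M_basis a u v x))"
    unfolding M_basis_def by (rule sum_edge_field[symmetric]) (simp add: M_index_def)
  also have "\<dots> \<in> bf.span (M_basis a u v ` M_index k)"
    by (intro bf.span_sum bf.span_scale bf.span_base) auto
  finally show "\<mu> \<in> bf.span (M_basis a u v ` M_index k)" .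
qed

lemma M_basis_coeffs_vanish:
  assumes nc: "\<not> collinear {0, u, v}"
    and "(\<Sum>x\<in>M_index k. bscale (c x) (M_basis a u v x)) = 0"
  shows "\<forall>x\<in>M_index k. c x = 0"
proof
  fix x assume x: "x \<in> M_index k"
  then have i: "fst x < 4" by (auto simp: M_index_def)
  have E: "edge_field (pg_ncross a u v) (\<lambda>i t. \<Sum>x\<in>M_index k. c x * (if i = fst x then t ^ snd x else 0)) = 0"
    using assms(2) unfolding M_basis_def by (simp add: sum_edge_field M_index_def)
  have vanish: "(\<Sum>m<Suc k. c (fst x, m) * t^m) = 0" if "t \<in> {0..1}" for t
    using edge_field_eq_0D[OF E pg_ncross_nonzero[OF nc i] i that] sum_M_index[OF i]
    by (simp add: lessThan_Suc_atMost)
  have "snd x < Suc k" using x by (auto simp: M_index_def)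
  from coeffs_zero_if_vanishes_on_unit_interval[OF vanish this] show "c x = 0" by simp
qed

lemma dim_Mspace:
  assumes "\<not> collinear {0, u, v}"
  shows "bdim (Mspace k a u v) = 4 * (k + 1)"
  unfolding bdim_def
proof (rule bf.dim_unique)
  have fin: "finite (M_index k)" by (simp add: M_index_def)
  show "M_basis a u v ` M_index k \<subseteq> Mspace k a u v" using M_basis_in_Mspace by blast
  show "Mspace k a u v \<subseteq> bf.span (M_basis a u v ` M_index k)" by (rule Mspace_subset_span)
  show "bf.independent (M_basis a u v ` M_index k)"
    using bf.independent_image_if_coeffs_vanish(1)[OF fin M_basis_coeffs_vanish[OF assms]] .
  show "card (M_basis a u v ` M_index k) = 4 * (k + 1)"
    using bf.independent_image_if_coeffs_vanish(2)[OF fin M_basis_coeffs_vanish[OF assms]]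
    by (simp add: M_index_def card_cartesian_product)
qed

lemma dim_scalar_traces:
  assumes nc: "\<not> collinear {0, u, v}"
  shows "bdim {trace_s a u v p | p. poly2 k p \<and> (\<forall>x\<in>pgram a u v. curl_s p x = 0)} = 1"
  unfolding bdim_def
proof (rule bf.dim_unique)
  let ?b = "trace_s a u v (\<lambda>_. 1)"
  have "poly2 k (\<lambda>x. 1)" using poly2_if_bipoly[OF bipoly_const[of k 1]] by simp
  moreover have "curl_s (\<lambda>_. 1) x = 0" for x
    by (simp add: curl_s_def pdx_def pdy_def vec2_eq_iff)
  ultimately show "{?b} \<subseteq> {trace_s a u v p | p. poly2 k p \<and> (\<forall>x\<in>pgram a u v. curl_s p x = 0)}"
    by blast
  show "{trace_s a u v p | p. poly2 k p \<and> (\<forall>x\<in>pgram a u v. curl_s p x = 0)} \<subseteq> bf.span {?b}"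
  proof clarify
    fix p assume p: "poly2 k p" "\<forall>x\<in>pgram a u v. curl_s p x = 0"
    have "p (pg_edge a u v i t) = p a" if "on_bdry i t" for i t
      using that by (intro curl_free_scalar_const[OF p] pg_edge_in_pgram) (auto simp: on_bdry_def)
    then have "trace_s a u v p = bscale (p a) ?b"
      by (auto simp: fun_eq_iff trace_s_def bscale_def ncross_s_pg_normal)
    then show "trace_s a u v p \<in> bf.span {?b}" by (simp add: bf.span_base bf.span_scale)
  qed
  have "?b 0 0 = pg_ncross a u v 0" by (simp add: trace_s_def on_bdry_def ncross_s_pg_normal)
  then have "?b \<noteq> 0" using pg_ncross_nonzero[OF nc, of 0 a] by force
  then show "bf.independent {?b}" using bf.independent_empty by (intro bf.independent_insertI) auto
  show "card {?b} = 1" by simp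
qed

section \<open>Tangential traces of curl-free fields\<close>

definition pg_tangent :: "real^2 \<Rightarrow> real^2 \<Rightarrow> nat \<Rightarrow> real^2" where
  "pg_tangent u v i = (1 / (pg_dir u v i \<bullet> pg_dir u v i)) *\<^sub>R pg_dir u v i"

text \<open>The derivative of \<open>\<Phi>\<close> along edge \<open>i\<close> of the unit square, taken in the direction of
  \<open>pg_dir\<close> rather than of the orientation of the edge.\<close>

definition edge_derivs :: "monomials \<Rightarrow> nat \<Rightarrow> real \<Rightarrow> real" where
  "edge_derivs \<Phi> i t = (if i = 0 then meval (mdx \<Phi>) t 0 else if i = 1 then meval (mdy \<Phi>) 1 t
     else if i = 2 then meval (mdx \<Phi>) (1 - t) 1 else meval (mdy \<Phi>) 0 (1 - t))"

lemma trace_t_gradient: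
  assumes nc: "\<not> collinear {0, u, v}"
    and grad: "\<forall>\<sigma>\<in>{0..1}. \<forall>\<tau>\<in>{0..1}. w (a + \<sigma> *\<^sub>R u + \<tau> *\<^sub>R v) \<bullet> u = meval (mdx \<Phi>) \<sigma> \<tau>
        \<and> w (a + \<sigma> *\<^sub>R u + \<tau> *\<^sub>R v) \<bullet> v = meval (mdy \<Phi>) \<sigma> \<tau>"
  shows "trace_t a u v w = edge_field (pg_tangent u v) (edge_derivs \<Phi>)"
proof (intro ext)
  fix i t
  show "trace_t a u v w i t = edge_field (pg_tangent u v) (edge_derivs \<Phi>) i t"
  proof (cases "on_bdry i t")
    case True
    then have i: "i < 4" and t: "t \<in> {0..1}" "1 - t \<in> {0..1}" by (auto simp: on_bdry_def)
    have "w (pg_edge a u v i t) \<bullet> pg_dir u v i = edge_derivs \<Phi> i t"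
      using i
    proof (cases rule: less_4_cases)
      case 1 then show ?thesis unfolding 1 pg_edge_simps using grad[rule_format, of t 0] t
        by (simp add: pg_dir_def edge_derivs_def)
    next
      case 2 then show ?thesis unfolding 2 pg_edge_simps using grad[rule_format, of 1 t] t
        by (simp add: pg_dir_def edge_derivs_def)
    next
      case 3 then show ?thesis unfolding 3 pg_edge_simps using grad[rule_format, of "1 - t" 1] t
        by (simp add: pg_dir_def edge_derivs_def)
    next
      case 4 then show ?thesis unfolding 4 pg_edge_simps using grad[rule_format, of 0 "1 - t"] t
        by (simp add: pg_dir_def edge_derivs_def)
    qed
    moreover have "tang (pg_normal a u v i) (w (pg_edge a u v i t))
        = (w (pg_edge a u v i t) \<bullet> pg_dir u v i) *\<^sub>R pg_tangent u v i"
      using tang_eq_projection[OF pg_normal_unit_orth[OF nc i] pg_dir_nonzero[OF nc]]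
      by (simp add: pg_tangent_def)
    ultimately show ?thesis using True by (simp add: trace_t_def edge_field_def)
  qed (simp add: trace_t_def edge_field_def)
qed

definition monomial_trace :: "real^2 \<Rightarrow> real^2 \<Rightarrow> nat \<Rightarrow> nat \<Rightarrow> bfield" where
  "monomial_trace u v m n = edge_field (pg_tangent u v) (edge_derivs [(1, m, n)])"

lemma edge_derivs_Cons:
  "edge_derivs ((c, m, n) # \<Phi>) i t = c * edge_derivs [(1, m, n)] i t + edge_derivs \<Phi> i t"
  by (simp add: edge_derivs_def)

lemma gradient_trace_in_span:
  "mdeg_le K \<Phi> \<Longrightarrow> edge_field (pg_tangent u v) (edge_derivs \<Phi>) \<in> bf.span {monomial_trace u v m n | m n. m + n \<le> K}"
proof (induction \<Phi> rule: monomials_induct)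
  case 1
  have "edge_derivs [] = (\<lambda>i t. 0)" by (simp add: fun_eq_iff edge_derivs_def)
  then have "edge_field (pg_tangent u v) (edge_derivs []) = 0" by simp
  then show ?case by (simp only: bf.span_zero)
next
  case (2 c m n \<Phi>)
  have "edge_field (pg_tangent u v) (edge_derivs ((c, m, n) # \<Phi>))
      = bscale c (monomial_trace u v m n) + edge_field (pg_tangent u v) (edge_derivs \<Phi>)"
    unfolding monomial_trace_def edge_derivs_Cons[of c m n \<Phi>, abs_def] by (rule edge_field_add_scale)
  moreover have "bscale c (monomial_trace u v m n) \<in> bf.span {monomial_trace u v m n | m n. m + n \<le> K}"
    using 2(2) by (intro bf.span_scale bf.span_base) auto
  moreover have "edge_field (pg_tangent u v) (edge_derivs \<Phi>) \<in> bf.span {monomial_trace u v m n | m n. m + n \<le> K}"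
    using 2 by simp
  ultimately show ?case by (simp only: bf.span_add)
qed

text \<open>The gradient of \<open>y \<mapsto> \<phi>(\<alpha> \<bullet> (y - a), \<beta> \<bullet> (y - a))\<close>.\<close>

definition grad_field :: "real^2 \<Rightarrow> real^2 \<Rightarrow> real^2 \<Rightarrow> monomials \<Rightarrow> real^2 \<Rightarrow> real^2" where
  "grad_field a \<alpha> \<beta> \<phi> y = meval (mdx \<phi>) (\<alpha> \<bullet> (y - a)) (\<beta> \<bullet> (y - a)) *\<^sub>R \<alpha>
     + meval (mdy \<phi>) (\<alpha> \<bullet> (y - a)) (\<beta> \<bullet> (y - a)) *\<^sub>R \<beta>"

lemma grad_field_component:
  "grad_field a \<alpha> \<beta> \<phi> y $ l = \<alpha>$l * meval (mdx \<phi>) (\<alpha> \<bullet> (y - a)) (\<beta> \<bullet> (y - a))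
     + \<beta>$l * meval (mdy \<phi>) (\<alpha> \<bullet> (y - a)) (\<beta> \<bullet> (y - a))"
  by (simp add: grad_field_def mult.commute)

lemma poly2_grad_field:
  assumes "mdeg_le (Suc k) \<phi>"
  shows "poly2 k (\<lambda>y. grad_field a \<alpha> \<beta> \<phi> y $ l)"
proof -
  have affine: "\<gamma> \<bullet> (y - a) = (- (\<gamma>$1 * a$1) - \<gamma>$2 * a$2) + \<gamma>$1 * y$1 + \<gamma>$2 * y$2" for \<gamma> y :: "real^2"
    by (simp add: inner_real2 algebra_simps)
  let ?p = "\<lambda>x1 x2. (- (\<alpha>$1 * a$1) - \<alpha>$2 * a$2) + \<alpha>$1 * x1 + \<alpha>$2 * x2"
  let ?q = "\<lambda>x1 x2. (- (\<beta>$1 * a$1) - \<beta>$2 * a$2) + \<beta>$1 * x1 + \<beta>$2 * x2"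
  have "bipoly k (\<lambda>x1 x2. \<alpha>$l * meval (mdx \<phi>) (?p x1 x2) (?q x1 x2) + \<beta>$l * meval (mdy \<phi>) (?p x1 x2) (?q x1 x2))"
    by (intro bipoly_add bipoly_scale bipoly_compose[OF bipoly_meval] bipoly_affine
        mdeg_le_mdx mdeg_le_mdy assms)
  from poly2_if_bipoly[OF this] show ?thesis
    by (simp only: grad_field_component affine)
qed

lemma DERIV_meval_dual_coords:
  "((\<lambda>s. meval P (\<alpha> \<bullet> (x + s *\<^sub>R e - a)) (\<beta> \<bullet> (x + s *\<^sub>R e - a))) has_real_derivative
     (\<alpha> \<bullet> e) * meval (mdx P) (\<alpha> \<bullet> (x - a)) (\<beta> \<bullet> (x - a))
   + (\<beta> \<bullet> e) * meval (mdy P) (\<alpha> \<bullet> (x - a)) (\<beta> \<bullet> (x - a))) (at 0)"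
proof -
  have "\<gamma> \<bullet> (x + s *\<^sub>R e - a) = \<gamma> \<bullet> (x - a) + s * (\<gamma> \<bullet> e)" for \<gamma> :: "'a" and s
    by (simp add: inner_diff_right inner_add_right)
  then show ?thesis
    using DERIV_meval_line[of P "\<alpha> \<bullet> (x - a)" "\<alpha> \<bullet> e" "\<beta> \<bullet> (x - a)" "\<beta> \<bullet> e" 0] by simp
qed

lemma directional_deriv_grad_field:
  fixes a \<alpha> \<beta> x :: "real^2"
  defines "X \<equiv> \<alpha> \<bullet> (x - a)" and "Y \<equiv> \<beta> \<bullet> (x - a)"
  shows "deriv (\<lambda>s. grad_field a \<alpha> \<beta> \<phi> (x + s *\<^sub>R e) $ l) 0
    = \<alpha>$l * ((\<alpha> \<bullet> e) * meval (mdx (mdx \<phi>)) X Y + (\<beta> \<bullet> e) * meval (mdy (mdx \<phi>)) X Y)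
    + \<beta>$l * ((\<alpha> \<bullet> e) * meval (mdx (mdy \<phi>)) X Y + (\<beta> \<bullet> e) * meval (mdy (mdy \<phi>)) X Y)"
  unfolding grad_field_component X_def Y_def
  by (intro DERIV_imp_deriv DERIV_add DERIV_cmult DERIV_meval_dual_coords)

lemma curl_v_grad_field: "curl_v (grad_field a \<alpha> \<beta> \<phi>) x = 0"
proof -
  have "\<gamma> \<bullet> axis 1 1 = \<gamma>$1" "\<gamma> \<bullet> axis 2 1 = \<gamma>$2" for \<gamma> :: "real^2"
    by (simp_all add: inner_real2 axis_def)
  then show ?thesis
    unfolding curl_v_def pdx_def pdy_def directional_deriv_grad_field meval_mdy_mdx
    by (simp add: algebra_simps)
qed

lemma grad_field_pullback:
  assumes "\<alpha> \<bullet> u = 1" "\<alpha> \<bullet> v = 0" "\<beta> \<bullet> u = 0" "\<beta> \<bullet> v = 1"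
  shows "grad_field a \<alpha> \<beta> \<phi> (a + \<sigma> *\<^sub>R u + \<tau> *\<^sub>R v) \<bullet> u = meval (mdx \<phi>) \<sigma> \<tau>"
    "grad_field a \<alpha> \<beta> \<phi> (a + \<sigma> *\<^sub>R u + \<tau> *\<^sub>R v) \<bullet> v = meval (mdy \<phi>) \<sigma> \<tau>"
  using assms by (simp_all add: grad_field_def inner_add_left inner_add_right inner_commute)

lemma monomial_trace_admissible:
  assumes nc: "\<not> collinear {0, u, v}" and mn: "m + n \<le> Suc k"
  shows "monomial_trace u v m n \<in> {trace_t a u v w | w. poly2 k (\<lambda>x. w x $ 1) \<and> poly2 k (\<lambda>x. w x $ 2)
                 \<and> (\<forall>x\<in>pgram a u v. curl_v w x = 0)}"
proof -
  obtain \<alpha> \<beta> :: "real^2" where dual: "\<alpha> \<bullet> u = 1" "\<alpha> \<bullet> v = 0" "\<beta> \<bullet> u = 0" "\<beta> \<bullet> v = 1"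
    using dual_basis_real2[OF nc] by blast
  let ?w = "grad_field a \<alpha> \<beta> [(1, m, n)]"
  have "monomial_trace u v m n = trace_t a u v ?w"
    unfolding monomial_trace_def by (rule trace_t_gradient[OF nc, symmetric]) (simp add: grad_field_pullback[OF dual])
  moreover have "poly2 k (\<lambda>x. ?w x $ 1)" "poly2 k (\<lambda>x. ?w x $ 2)"
    using mn by (intro poly2_grad_field; simp)+
  ultimately show ?thesis using curl_v_grad_field by blast
qed

definition trace_exps :: "nat \<times> nat \<Rightarrow> nat \<times> nat" where
  "trace_exps x = (if fst x = 0 then (Suc (snd x), 0) else if fst x = 1 then (0, Suc (snd x))
     else if fst x = 2 then (Suc (snd x), 1) else (1, Suc (snd x)))"

definition trace_index :: "nat \<Rightarrow> (nat \<times> nat) set" where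
  "trace_index k = Pair 0 ` {..k} \<union> Pair 1 ` {..k} \<union> Pair 2 ` {..<k} \<union> Pair 3 ` {1..<k}"

definition trace_basis :: "real^2 \<Rightarrow> real^2 \<Rightarrow> nat \<times> nat \<Rightarrow> bfield" where
  "trace_basis u v x = monomial_trace u v (fst (trace_exps x)) (snd (trace_exps x))"

lemma finite_trace_index: "finite (trace_index k)"
  by (simp add: trace_index_def)

lemma sum_trace_index:
  "(\<Sum>x\<in>trace_index k. F x)
    = (\<Sum>m\<le>k. F (0, m)) + (\<Sum>m\<le>k. F (1, m)) + (\<Sum>m<k. F (2, m)) + (\<Sum>m\<in>{1..<k}. F (3, m))"
proof -
  have "sum F (Pair c ` A) = (\<Sum>m\<in>A. F (c, m))" for c A
    by (simp add: sum.reindex inj_on_def)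
  then show ?thesis unfolding trace_index_def
    by (subst sum.union_disjoint, force, force, force)+ simp
qed

lemma card_trace_index: "1 \<le> k \<Longrightarrow> card (trace_index k) = 4 * k + 1"
  using sum_trace_index[where k = k and F = "\<lambda>_. 1::nat"] by (simp add: card_eq_sum[symmetric])

lemma edge_derivs_monomial:
  "edge_derivs [(1, m, n)] 0 t = real m * t^(m - 1) * 0^n"
  "edge_derivs [(1, m, n)] (Suc 0) t = real n * t^(n - 1)"
  "edge_derivs [(1, m, n)] 2 t = real m * (1 - t)^(m - 1)"
  "edge_derivs [(1, m, n)] 3 t = real n * 0^m * (1 - t)^(n - 1)"
  by (simp_all add: edge_derivs_def)

lemma trace_basis_combination_on_edges:
  assumes nc: "\<not> collinear {0, u, v}"
    and zero: "(\<Sum>x\<in>trace_index k. bscale (c x) (trace_basis u v x)) = 0"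
    and "i < 4" "t \<in> {0..1}"
  shows "(\<Sum>x\<in>trace_index k. c x * edge_derivs [(1, fst (trace_exps x), snd (trace_exps x))] i t) = 0"
proof -
  have "edge_field (pg_tangent u v)
      (\<lambda>i t. \<Sum>x\<in>trace_index k. c x * edge_derivs [(1, fst (trace_exps x), snd (trace_exps x))] i t) = 0"
    using zero unfolding trace_basis_def monomial_trace_def by (simp add: sum_edge_field finite_trace_index)
  moreover have "pg_tangent u v i \<noteq> 0" using pg_dir_nonzero[OF nc] by (simp add: pg_tangent_def)
  ultimately show ?thesis using edge_field_eq_0D assms(3,4) by blast
qed

text \<open>Independence is read off edge by edge: the bottom and left edges see only the pure powers
  of \<open>\<sigma>\<close> and of \<open>\<tau>\<close>; then the right edge sees only the \<open>\<sigma> \<tau>\<^sup>n\<close> up to a constant,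
  and finally the top edge sees only the \<open>\<sigma>\<^sup>m \<tau>\<close>.\<close>

lemma trace_basis_coeffs_vanish:
  assumes nc: "\<not> collinear {0, u, v}" and k: "1 \<le> k"
    and zero: "(\<Sum>x\<in>trace_index k. bscale (c x) (trace_basis u v x)) = 0"
  shows "\<forall>x\<in>trace_index k. c x = 0"
proof -
  note E = trace_basis_combination_on_edges[OF nc zero]
  have c0: "c (0, m) = 0" if "m \<le> k" for m
  proof -
    have "(\<Sum>m<Suc k. (c (0, m) * real (Suc m)) * t^m) = 0" if "t \<in> {0..1}" for t
      using E[of 0 t] that
      by (simp add: sum_trace_index trace_exps_def edge_derivs_monomial algebra_simps lessThan_Suc_atMost)
    from coeffs_zero_if_vanishes_on_unit_interval[where c = "\<lambda>m. c (0, m) * real (Suc m)", OF this, of m]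
    show ?thesis using that by simp
  qed
  have c1: "c (1, m) = 0" if "m \<le> k" for m
  proof -
    have "(\<Sum>m<Suc k. (c (1, m) * real (Suc m)) * (1 - t)^m) = 0" if "t \<in> {0..1}" for t
      using E[of 3 t] that
      by (simp add: sum_trace_index trace_exps_def edge_derivs_monomial algebra_simps lessThan_Suc_atMost)
    from coeffs_zero_if_vanishes_on_unit_interval_reflected[where c = "\<lambda>m. c (1, m) * real (Suc m)", OF this, of m]
    show ?thesis using that by simp
  qed
  have c3: "c (3, m) = 0" if "m \<in> {1..<k}" for m
  proof -
    have "(\<Sum>m<k. c (2, m)) + (\<Sum>m\<in>{1..<k}. (c (3, m) * real (Suc m)) * t^m) = 0" if "t \<in> {0..1}" for t
      using E[of 1 t] c1 that by (simp add: sum_trace_index trace_exps_def edge_derivs_monomial algebra_simps)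
    from coeffs_zero_if_vanishes_on_unit_interval_const[where c = "\<lambda>m. c (3, m) * real (Suc m)", OF this that]
    show ?thesis by simp
  qed
  have c2: "c (2, m) = 0" if "m < k" for m
  proof -
    have "(\<Sum>m<k. (c (2, m) * real (Suc m)) * (1 - t)^m) = 0" if "t \<in> {0..1}" for t
      using E[of 2 t] c0 c3 that by (simp add: sum_trace_index trace_exps_def edge_derivs_monomial algebra_simps)
    from coeffs_zero_if_vanishes_on_unit_interval_reflected[where c = "\<lambda>m. c (2, m) * real (Suc m)", OF this that]
    show ?thesis by simp
  qed
  show ?thesis using c0 c1 c2 c3 unfolding trace_index_def by auto
qed

lemma monomial_trace_split:
  assumes "1 \<le> m" "1 \<le> n"
  shows "monomial_trace u v m n = monomial_trace u v m 1 + monomial_trace u v 1 n - monomial_trace u v 1 1"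
proof -
  have "edge_derivs [(1, m, n)] i t
      = edge_derivs [(1, m, 1)] i t + edge_derivs [(1, 1, n)] i t - edge_derivs [(1, 1, 1)] i t" for i t
    using assms by (simp add: edge_derivs_def power_0_left)
  then show ?thesis
    by (simp add: fun_eq_iff monomial_trace_def edge_field_def scaleR_add_left scaleR_diff_left)
qed

lemma monomial_trace_0_0: "monomial_trace u v 0 0 = 0"
proof -
  have "edge_derivs [(1, 0, 0)] = (\<lambda>i t. 0)" by (simp add: fun_eq_iff edge_derivs_def)
  then show ?thesis unfolding monomial_trace_def by simp
qed

lemma monomial_trace_in_basis:
  assumes "(1 \<le> m \<and> m \<le> Suc k \<and> n = 0) \<or> (m = 0 \<and> 1 \<le> n \<and> n \<le> Suc k)
    \<or> (1 \<le> m \<and> m \<le> k \<and> n = 1) \<or> (m = 1 \<and> 2 \<le> n \<and> n \<le> k)"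
  shows "monomial_trace u v m n \<in> trace_basis u v ` trace_index k"
proof -
  have "\<exists>x\<in>trace_index k. trace_exps x = (m, n)"
    using assms
  proof (elim disjE conjE)
    assume "1 \<le> m" "m \<le> Suc k" "n = 0"
    then show ?thesis by (intro bexI[of _ "(0, m - 1)"]) (auto simp: trace_index_def trace_exps_def image_iff)
  next
    assume "m = 0" "1 \<le> n" "n \<le> Suc k"
    then show ?thesis by (intro bexI[of _ "(1, n - 1)"]) (auto simp: trace_index_def trace_exps_def image_iff)
  next
    assume "1 \<le> m" "m \<le> k" "n = 1"
    then show ?thesis by (intro bexI[of _ "(2, m - 1)"]) (auto simp: trace_index_def trace_exps_def image_iff)
  next
    assume "m = 1" "2 \<le> n" "n \<le> k"
    then show ?thesis by (intro bexI[of _ "(3, n - 1)"]) (auto simp: trace_index_def trace_exps_def image_iff)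
  qed
  then show ?thesis unfolding trace_basis_def by force
qed

lemma monomial_trace_in_span_basis:
  assumes k: "1 \<le> k" and mn: "m + n \<le> Suc k"
  shows "monomial_trace u v m n \<in> bf.span (trace_basis u v ` trace_index k)"
proof -
  have base: "monomial_trace u v m' n' \<in> bf.span (trace_basis u v ` trace_index k)"
    if "(1 \<le> m' \<and> m' \<le> Suc k \<and> n' = 0) \<or> (m' = 0 \<and> 1 \<le> n' \<and> n' \<le> Suc k)
      \<or> (1 \<le> m' \<and> m' \<le> k \<and> n' = 1) \<or> (m' = 1 \<and> 2 \<le> n' \<and> n' \<le> k)" for m' n'
    using monomial_trace_in_basis[OF that] by (rule bf.span_base)
  consider "m = 0" "n = 0" | "m = 0" "1 \<le> n" | "1 \<le> m" "n = 0" | "1 \<le> m" "1 \<le> n" by linarith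
  then show ?thesis
  proof cases
    case 1 then show ?thesis by (simp add: monomial_trace_0_0 bf.span_zero)
  next
    case 2 then show ?thesis using mn by (intro base) simp
  next
    case 3 then show ?thesis using mn by (intro base) simp
  next
    case 4
    have "monomial_trace u v m 1 \<in> bf.span (trace_basis u v ` trace_index k)"
      "monomial_trace u v 1 n \<in> bf.span (trace_basis u v ` trace_index k)"
      "monomial_trace u v 1 1 \<in> bf.span (trace_basis u v ` trace_index k)"
      using 4 k mn by (auto intro!: base)
    then show ?thesis unfolding monomial_trace_split[OF 4] by (simp add: bf.span_add bf.span_diff)
  qed
qed

lemma dim_tangential_traces:
  assumes nc: "\<not> collinear {0, u, v}" and k: "1 \<le> k"
  shows "bdim {trace_t a u v w | w. poly2 k (\<lambda>x. w x $ 1) \<and> poly2 k (\<lambda>x. w x $ 2)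
                 \<and> (\<forall>x\<in>pgram a u v. curl_v w x = 0)} = 4 * k + 1"
  unfolding bdim_def
proof (rule bf.dim_unique)
  let ?B = "trace_basis u v ` trace_index k"
  show "?B \<subseteq> {trace_t a u v w | w. poly2 k (\<lambda>x. w x $ 1) \<and> poly2 k (\<lambda>x. w x $ 2)
                 \<and> (\<forall>x\<in>pgram a u v. curl_v w x = 0)}"
    unfolding trace_basis_def
    by (auto intro!: monomial_trace_admissible[OF nc] simp: trace_index_def trace_exps_def)
  have "{monomial_trace u v m n | m n. m + n \<le> Suc k} \<subseteq> bf.span ?B"
    using monomial_trace_in_span_basis[OF k] by blast
  then have monomials: "bf.span {monomial_trace u v m n | m n. m + n \<le> Suc k} \<subseteq> bf.span ?B"
    by (rule bf.span_minimal[OF _ bf.subspace_span])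
  show "{trace_t a u v w | w. poly2 k (\<lambda>x. w x $ 1) \<and> poly2 k (\<lambda>x. w x $ 2)
                 \<and> (\<forall>x\<in>pgram a u v. curl_v w x = 0)} \<subseteq> bf.span ?B"
  proof clarify
    fix w assume w: "poly2 k (\<lambda>x. w x $ 1)" "poly2 k (\<lambda>x. w x $ 2)" "\<forall>x\<in>pgram a u v. curl_v w x = 0"
    obtain \<Phi> where \<Phi>: "mdeg_le (Suc k) \<Phi>" "\<forall>\<sigma>\<in>{0..1}. \<forall>\<tau>\<in>{0..1}.
        w (a + \<sigma> *\<^sub>R u + \<tau> *\<^sub>R v) \<bullet> u = meval (mdx \<Phi>) \<sigma> \<tau> \<and> w (a + \<sigma> *\<^sub>R u + \<tau> *\<^sub>R v) \<bullet> v = meval (mdy \<Phi>) \<sigma> \<tau>"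
      using curl_free_potential[OF w] by blast
    show "trace_t a u v w \<in> bf.span ?B"
      unfolding trace_t_gradient[OF nc \<Phi>(2)] using gradient_trace_in_span[OF \<Phi>(1)] monomials by blast
  qed
  show "bf.independent ?B" "card ?B = 4 * k + 1"
    using bf.independent_image_if_coeffs_vanish[OF finite_trace_index trace_basis_coeffs_vanish[OF nc k]]
      card_trace_index[OF k] by simp_all
qed

theorem lemma5p5:
  fixes a u v :: "real^2" and k :: nat
  assumes "k \<ge> 1"
    and "\<not> collinear {0, u, v}"
  shows "I_M k a u v = 2"
proof -
  have "I_M k a u v = int (4 * (k + 1)) - int 1 - int (4 * k + 1)"
    unfolding I_M_def dim_Mspace[OF assms(2)] dim_scalar_traces[OF assms(2)]
      dim_tangential_traces[OF assms(2,1)] ..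
  then show ?thesis by simp
qed

end
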